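(* Let $k$ be a positive integer and let $f\in H^{k,2}$ be such that $M_{f^{(k)}}(1)\leq 1$. Then, for every $0<r<1$, $$\|f\|_2\leq\sum_{s=0}^{k-1}\frac{(1-r)^s}{s!}M_{f^{(s)}}(r)+\left[\frac{\log r}{\log M_{f^{(k)}}(r)}\right]^k.$$
   Context: $\mathbb D$ is the open unit disk. $H^2$ is the Hardy space of $\mathbb D$, $\|f\|_2=\left(\frac{1}{2\pi}\int_0^{2\pi}|f(e^{i\theta})|^2d\theta\right)^{1/2}$ on boundary values, and $H^{k,2}=\{f\in H^2: f^{(j)}\in H^2,\ j=1,\dots,k\}$ (derivatives with respect to $z$). For $g$ analytic in $\mathbb D$ and $0<r<1$, $M_g(r)=\left(\frac{1}{2\pi}\int_0^{2\pi}|g(re^{i\theta})|^2d\theta\right)^{1/2}$, and $M_g(1)=\lim_{r\to1}M_g(r)=\sup_{r<1}M_g(r)$. *)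

theory Defs
  imports "HOL-Analysis.Analysis"
begin

definition intmean :: "(complex \<Rightarrow> complex) \<Rightarrow> real \<Rightarrow> real" where
  "intmean g r = sqrt (integral {0..2*pi} (\<lambda>t. (cmod (g (complex_of_real r * cis t)))\<^sup>2) / (2*pi))"

definition intmean1 :: "(complex \<Rightarrow> complex) \<Rightarrow> real" where
  "intmean1 g = (SUP r\<in>{0<..<1}. intmean g r)"

definition hardy2 :: "(complex \<Rightarrow> complex) \<Rightarrow> bool" where
  "hardy2 f \<longleftrightarrow> f holomorphic_on ball 0 1 \<and> bdd_above (intmean f ` {0<..<1})"

definition hardy_k2 :: "nat \<Rightarrow> (complex \<Rightarrow> complex) \<Rightarrow> bool" where
  "hardy_k2 k f \<longleftrightarrow> (\<forall>j\<le>k. hardy2 ((deriv ^^ j) f))"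

text \<open>H^2 norm; for f in H^2 the L^2 norm of the boundary values equals sup_r M_f(r).\<close>
definition hardy2_norm :: "(complex \<Rightarrow> complex) \<Rightarrow> real" where
  "hardy2_norm f = intmean1 f"

end

theory Submission
  imports Defs "HOL-Complex_Analysis.Cauchy_Integral_Formula"
begin

text \<open>By Parseval, M_g(rho)^2 = sum_n (|g^(n)(0)|/n! rho^n)^2, so all integral means become
  l^2 norms of coefficient sequences, and the coefficients of f^(s) are the shifted coefficients
  of f. For r < rho < 1 expand rho^n by Taylor's formula with integral remainder around r.
  By Minkowski's inequality in l^2, the s-th Taylor term contributes at most
  (rho - r)^s/s! M_{f^(s)}(r). For the remainder, Young's inequality and M_{f^(k)}(1) <= 1 give
  the convexity bound M_{f^(k)}(t) <= M_{f^(k)}(r)^(log t / log r) <= exp (alpha (t - rho)) on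
  [r, rho], where alpha = log M_{f^(k)}(r) / log r; the Taylor kernel (rho - t)^(k-1)/(k-1)!
  integrates against this exponential to at most alpha^(-k). Taking the supremum over rho
  bounds the H^2 norm.\<close>

lemma L2_set_le_iff_sum_le:
  "0 \<le> B \<Longrightarrow> L2_set f A \<le> B \<longleftrightarrow> (\<Sum>i\<in>A. (f i)\<^sup>2) \<le> B\<^sup>2"
  unfolding L2_set_def using real_le_lsqrt sqrt_le_D by blast

lemma L2_set_sum_triangle:
  assumes "finite S"
  shows "L2_set (\<lambda>i. \<Sum>s\<in>S. u s i) A \<le> (\<Sum>s\<in>S. L2_set (u s) A)"
  using assms
proof (induction S rule: finite_induct)
  case empty
  then show ?case by (simp add: L2_set_0')
next
  case (insert x F)
  have "L2_set (\<lambda>i. \<Sum>s\<in>insert x F. u s i) A = L2_set (\<lambda>i. u x i + (\<Sum>s\<in>F. u s i)) A"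
    using insert by simp
  also have "\<dots> \<le> L2_set (u x) A + L2_set (\<lambda>i. \<Sum>s\<in>F. u s i) A"
    by (rule L2_set_triangle_ineq)
  also have "\<dots> \<le> L2_set (u x) A + (\<Sum>s\<in>F. L2_set (u s) A)"
    using insert by simp
  finally show ?case using insert by simp
qed

lemma sum_shift_lessThan:
  fixes s :: nat
  shows "(\<Sum>n<N. if s \<le> n then g (n - s) else 0) = (\<Sum>j<N - s. g j)"
proof (induction N)
  case (Suc N)
  then show ?case by (cases "s \<le> N") (simp_all add: Suc_diff_le)
qed simp

lemma L2_set_shift_lessThan:
  fixes s :: nat
  shows "L2_set (\<lambda>n. if s \<le> n then g (n - s) else 0) {..<N} = L2_set g {..<N - s}"
proof -
  have "(\<Sum>n<N. (if s \<le> n then g (n - s) else 0)\<^sup>2) = (\<Sum>n<N. if s \<le> n then (g (n - s))\<^sup>2 else 0)"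
    by (intro sum.cong) auto
  then show ?thesis
    unfolding L2_set_def by (simp add: sum_shift_lessThan[of s "\<lambda>j. (g j)\<^sup>2" N])
qed

section \<open>Parseval's identity on circles\<close>

lemma has_integral_cos_int_mult:
  fixes k :: int
  shows "((\<lambda>t. cos (of_int k * t)) has_integral (if k = 0 then 2*pi else 0)) {0..2*pi}"
proof (cases "k = 0")
  case True
  then show ?thesis using has_integral_const_real[of "1::real" 0 "2*pi"] by simp
next
  case False
  have "((\<lambda>t. cos (of_int k * t)) has_integral
      ((\<lambda>t. sin (of_int k * t) / of_int k) (2*pi) - (\<lambda>t. sin (of_int k * t) / of_int k) 0)) {0..2*pi}"
  proof (rule fundamental_theorem_of_calculus)
    fix x assume "x \<in> {0..2*pi}"
    have "((\<lambda>t. sin (of_int k * t) / of_int k) has_real_derivative cos (of_int k * x)) (at x within {0..2*pi})"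
      using False by (auto intro!: derivative_eq_intros)
    then show "((\<lambda>t. sin (of_int k * t) / of_int k) has_vector_derivative cos (of_int k * x)) (at x within {0..2*pi})"
      by (simp add: has_real_derivative_iff_has_vector_derivative)
  qed simp
  moreover have "sin (of_int k * (2*pi)) = 0"
    by (metis mult.commute sin_int_2pin)
  ultimately show ?thesis using False by simp
qed

lemma has_integral_sin_int_mult:
  fixes k :: int
  shows "((\<lambda>t. sin (of_int k * t)) has_integral 0) {0..2*pi}"
proof (cases "k = 0")
  case True
  then show ?thesis by simp
next
  case False
  have "((\<lambda>t. sin (of_int k * t)) has_integral
      ((\<lambda>t. - cos (of_int k * t) / of_int k) (2*pi) - (\<lambda>t. - cos (of_int k * t) / of_int k) 0)) {0..2*pi}"
  proof (rule fundamental_theorem_of_calculus)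
    fix x assume "x \<in> {0..2*pi}"
    have "((\<lambda>t. - cos (of_int k * t) / of_int k) has_real_derivative sin (of_int k * x)) (at x within {0..2*pi})"
      using False by (auto intro!: derivative_eq_intros)
    then show "((\<lambda>t. - cos (of_int k * t) / of_int k) has_vector_derivative sin (of_int k * x)) (at x within {0..2*pi})"
      by (simp add: has_real_derivative_iff_has_vector_derivative)
  qed simp
  moreover have "cos (of_int k * (2*pi)) = 1"
    by (metis mult.commute cos_int_2pin)
  ultimately show ?thesis using False by simp
qed

lemma norm_sum_pow_cis_squared:
  fixes b :: "nat \<Rightarrow> complex" and \<rho> t :: real
  shows "(cmod (\<Sum>n<N. b n * (of_real \<rho> * cis t)^n))\<^sup>2 =
    (\<Sum>n<N. \<Sum>m<N. Re (b n * cnj (b m) * of_real (\<rho>^(n+m))) * cos (of_int (int n - int m) * t)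
        - Im (b n * cnj (b m) * of_real (\<rho>^(n+m))) * sin (of_int (int n - int m) * t))"
proof -
  define S where "S = (\<Sum>n<N. b n * (of_real \<rho> * cis t)^n)"
  have S: "S = (\<Sum>n<N. b n * of_real (\<rho>^n) * cis (real n * t))"
    unfolding S_def
    by (intro sum.cong refl) (simp only: power_mult_distrib Complex.DeMoivre of_real_power mult.assoc)
  have cnj_S: "cnj S = (\<Sum>m<N. cnj (b m) * of_real (\<rho>^m) * cis (- (real m * t)))"
    unfolding S by (simp add: cis_cnj)
  have "complex_of_real ((cmod S)\<^sup>2) = S * cnj S" by (rule complex_norm_square)
  also have "\<dots> = (\<Sum>n<N. \<Sum>m<N. (b n * cnj (b m) * of_real (\<rho>^(n+m))) * cis (of_int (int n - int m) * t))"
    unfolding cnj_S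
    by (subst S, subst sum_product) (auto intro!: sum.cong simp: cis_mult power_add algebra_simps)
  finally have "(cmod S)\<^sup>2 =
      Re (\<Sum>n<N. \<Sum>m<N. (b n * cnj (b m) * of_real (\<rho>^(n+m))) * cis (of_int (int n - int m) * t))"
    by (metis Re_complex_of_real)
  then show ?thesis
    unfolding S_def by (simp add: Re_sum cis.sel)
qed

lemma has_integral_norm_sum_pow_cis_squared:
  fixes b :: "nat \<Rightarrow> complex" and \<rho> :: real
  shows "((\<lambda>t. (cmod (\<Sum>n<N. b n * (of_real \<rho> * cis t)^n))\<^sup>2) has_integral
     (2*pi * (\<Sum>n<N. (cmod (b n))\<^sup>2 * \<rho>^(2*n)))) {0..2*pi}"
proof -
  let ?c = "\<lambda>n m. b n * cnj (b m) * of_real (\<rho>^(n+m))"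
  have "((\<lambda>t. \<Sum>n<N. \<Sum>m<N. Re (?c n m) * cos (of_int (int n - int m) * t)
        - Im (?c n m) * sin (of_int (int n - int m) * t)) has_integral
     (\<Sum>n<N. \<Sum>m<N. Re (?c n m) * (if int n - int m = 0 then 2*pi else 0) - Im (?c n m) * 0)) {0..2*pi}"
    by (intro has_integral_sum finite_lessThan has_integral_diff has_integral_mult_right
        has_integral_cos_int_mult has_integral_sin_int_mult)
  moreover have "(\<Sum>m<N. Re (?c n m) * (if int n - int m = 0 then 2*pi else 0) - Im (?c n m) * 0)
      = 2*pi * ((cmod (b n))\<^sup>2 * \<rho>^(2*n))" if "n < N" for n
  proof -
    have "?c n n = of_real ((cmod (b n))\<^sup>2 * \<rho>^(2*n))"
      by (simp add: complex_norm_square[symmetric] mult_2 power_add)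
    then have "Re (?c n n) = (cmod (b n))\<^sup>2 * \<rho>^(2*n)"
      by (metis Re_complex_of_real)
    moreover have "(\<Sum>m<N. Re (?c n m) * (if int n - int m = 0 then 2*pi else 0) - Im (?c n m) * 0)
        = (\<Sum>m<N. if m = n then Re (?c n m) * (2*pi) else 0)"
      by (intro sum.cong refl) auto
    ultimately show ?thesis using that by (simp add: sum.delta')
  qed
  then have "(\<Sum>n<N. \<Sum>m<N. Re (?c n m) * (if int n - int m = 0 then 2*pi else 0) - Im (?c n m) * 0)
      = 2*pi * (\<Sum>n<N. (cmod (b n))\<^sup>2 * \<rho>^(2*n))"
    by (simp add: sum_distrib_left)
  ultimately show ?thesis
    by (simp only: norm_sum_pow_cis_squared)
qed

definition taylor_coeff :: "(complex \<Rightarrow> complex) \<Rightarrow> nat \<Rightarrow> real" where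
  "taylor_coeff g n = cmod ((deriv ^^ n) g 0) / fact n"

lemma taylor_coeff_nonneg: "0 \<le> taylor_coeff g n"
  by (simp add: taylor_coeff_def)

lemma intmean_nonneg: "0 \<le> intmean g \<rho>"
proof -
  have "0 \<le> integral {0..2*pi} (\<lambda>t. (cmod (g (complex_of_real \<rho> * cis t)))\<^sup>2)"
    by (cases "(\<lambda>t. (cmod (g (complex_of_real \<rho> * cis t)))\<^sup>2) integrable_on {0..2*pi}")
      (auto intro: integral_nonneg simp: not_integrable_integral)
  then show ?thesis unfolding intmean_def by simp
qed

text \<open>The partial sums of the Taylor series converge boundedly on the circle of radius \<rho>,
  so dominated convergence passes Parseval's identity for polynomials to the limit.\<close>

lemma intmean_squared_sums:
  assumes hol: "g holomorphic_on ball 0 1" and \<rho>: "0 < \<rho>" "\<rho> < 1"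
  shows "(\<lambda>n. (taylor_coeff g n * \<rho>^n)\<^sup>2) sums (intmean g \<rho>)\<^sup>2"
proof -
  define b where "b n = (deriv ^^ n) g 0 / fact n" for n
  have ser: "(\<lambda>n. b n * z^n) sums g z" if "z \<in> ball 0 1" for z
    using holomorphic_power_series[OF hol that] by (simp add: b_def)
  obtain \<rho>' where \<rho>': "\<rho> < \<rho>'" "\<rho>' < 1"
    using \<rho>(2) dense by blast
  have "(\<lambda>n. b n * (of_real \<rho>')^n) sums g (of_real \<rho>')"
    using \<rho> \<rho>' by (intro ser) simp
  then have "summable (\<lambda>n. norm (b n * (of_real \<rho>)^n))"
    using \<rho> \<rho>' by (intro powser_insidea[of _ "of_real \<rho>'"]) (auto simp: sums_summable)
  then have abs_summable: "summable (\<lambda>n. norm (b n * (of_real \<rho> * cis t)^n))" for t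
    by (simp add: norm_mult norm_power)
  define K where "K = (\<Sum>n. norm (b n * (of_real \<rho>)^n))"
  define S where "S N t = (\<Sum>n<N. b n * (of_real \<rho> * cis t)^n)" for N t
  have S_bounded: "norm (S N t) \<le> K" for N t
  proof -
    have "norm (S N t) \<le> (\<Sum>n<N. norm (b n * (of_real \<rho> * cis t)^n))"
      unfolding S_def by (rule norm_sum)
    also have "\<dots> \<le> (\<Sum>n. norm (b n * (of_real \<rho> * cis t)^n))"
      by (intro sum_le_suminf abs_summable) auto
    also have "\<dots> = K" unfolding K_def by (simp add: norm_mult norm_power)
    finally show ?thesis .
  qed
  have S_tendsto: "(\<lambda>N. S N t) \<longlonglongrightarrow> g (of_real \<rho> * cis t)" for t
  proof -
    have "(\<lambda>n. b n * (of_real \<rho> * cis t)^n) sums g (of_real \<rho> * cis t)"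
      using \<rho> by (intro ser) (simp add: norm_mult)
    then show ?thesis unfolding sums_def S_def .
  qed
  define I where "I = integral {0..2*pi} (\<lambda>t. (cmod (g (of_real \<rho> * cis t)))\<^sup>2)"
  have "(\<lambda>t. (cmod (S N t))\<^sup>2) integrable_on {0..2*pi}" for N
    unfolding S_def using has_integral_norm_sum_pow_cis_squared by blast
  moreover have "norm ((cmod (S N t))\<^sup>2) \<le> K\<^sup>2" for N t
    using S_bounded[of N t] by (simp add: power_mono)
  moreover have "(\<lambda>N. (cmod (S N t))\<^sup>2) \<longlonglongrightarrow> (cmod (g (of_real \<rho> * cis t)))\<^sup>2" for t
    by (intro tendsto_intros S_tendsto)
  ultimately have "(\<lambda>N. integral {0..2*pi} (\<lambda>t. (cmod (S N t))\<^sup>2)) \<longlonglongrightarrow> I"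
    unfolding I_def by (intro dominated_convergence(2)[where h = "\<lambda>t. K\<^sup>2"]) auto
  moreover have "integral {0..2*pi} (\<lambda>t. (cmod (S N t))\<^sup>2) = 2*pi * (\<Sum>n<N. (cmod (b n))\<^sup>2 * \<rho>^(2*n))" for N
    unfolding S_def by (rule integral_unique[OF has_integral_norm_sum_pow_cis_squared])
  ultimately have "(\<lambda>N. (2*pi * (\<Sum>n<N. (cmod (b n))\<^sup>2 * \<rho>^(2*n))) / (2*pi)) \<longlonglongrightarrow> I / (2*pi)"
    by (intro tendsto_intros) auto
  then have "(\<lambda>n. (cmod (b n))\<^sup>2 * \<rho>^(2*n)) sums (I / (2*pi))"
    unfolding sums_def by simp
  moreover have "(cmod (b n))\<^sup>2 * \<rho>^(2*n) = (taylor_coeff g n * \<rho>^n)\<^sup>2" for n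
    by (simp add: b_def taylor_coeff_def norm_divide power_mult_distrib power_mult
        mult.commute[of 2] power_divide)
  moreover have "I / (2*pi) = (intmean g \<rho>)\<^sup>2"
    using intmean_nonneg[of g \<rho>] unfolding intmean_def I_def
    by (metis real_sqrt_ge_0_iff real_sqrt_pow2 zero_le_power2 mult_nonneg_nonneg
        not_le sqrt_le_D)
  ultimately show ?thesis by simp
qed

lemma L2_set_taylor_coeff_le_intmean:
  assumes "g holomorphic_on ball 0 1" "0 < \<rho>" "\<rho> < 1"
  shows "L2_set (\<lambda>n. taylor_coeff g n * \<rho>^n) {..<N} \<le> intmean g \<rho>"
proof -
  note sums = intmean_squared_sums[OF assms]
  have "(\<Sum>n<N. (taylor_coeff g n * \<rho>^n)\<^sup>2) \<le> (\<Sum>n. (taylor_coeff g n * \<rho>^n)\<^sup>2)"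
    using sums by (intro sum_le_suminf) (auto simp: sums_summable)
  then show ?thesis
    using sums_unique[OF sums] by (simp add: L2_set_le_iff_sum_le intmean_nonneg)
qed

lemma intmean_le_if_L2_set_taylor_coeff_le:
  assumes "g holomorphic_on ball 0 1" "0 < \<rho>" "\<rho> < 1"
    and bound: "\<And>N. L2_set (\<lambda>n. taylor_coeff g n * \<rho>^n) {..<N} \<le> B"
  shows "intmean g \<rho> \<le> B"
proof -
  have B: "0 \<le> B" using bound[of 0] by simp
  note sums = intmean_squared_sums[OF assms(1-3)]
  have "(intmean g \<rho>)\<^sup>2 \<le> B\<^sup>2"
    unfolding sums_unique[OF sums]
    using sums bound B by (intro suminf_le_const) (auto simp: sums_summable L2_set_le_iff_sum_le)
  then show ?thesis using B by (rule power2_le_imp_le)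
qed

lemma intmean_mono:
  assumes "g holomorphic_on ball 0 1" "0 < \<rho>" "\<rho> \<le> \<rho>'" "\<rho>' < 1"
  shows "intmean g \<rho> \<le> intmean g \<rho>'"
proof (rule intmean_le_if_L2_set_taylor_coeff_le)
  fix N
  have "L2_set (\<lambda>n. taylor_coeff g n * \<rho>^n) {..<N} \<le> L2_set (\<lambda>n. taylor_coeff g n * \<rho>'^n) {..<N}"
    using assms by (intro L2_set_mono mult_left_mono power_mono) (auto intro!: mult_nonneg_nonneg taylor_coeff_nonneg)
  also have "\<dots> \<le> intmean g \<rho>'"
    using assms by (intro L2_set_taylor_coeff_le_intmean) auto
  finally show "L2_set (\<lambda>n. taylor_coeff g n * \<rho>^n) {..<N} \<le> intmean g \<rho>'" .
qed (use assms in auto)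

lemma intmean_le_intmean1:
  assumes "hardy2 g" "0 < \<rho>" "\<rho> < 1"
  shows "intmean g \<rho> \<le> intmean1 g"
  using assms unfolding hardy2_def intmean1_def by (intro cSUP_upper) auto

lemma sum_taylor_coeff_squared_le_intmean1:
  assumes "hardy2 g"
  shows "(\<Sum>j<J. (taylor_coeff g j)\<^sup>2) \<le> (intmean1 g)\<^sup>2"
proof -
  have hol: "g holomorphic_on ball 0 1" using assms by (simp add: hardy2_def)
  have "((\<lambda>x. \<Sum>j<J. (taylor_coeff g j * x^j)\<^sup>2) \<longlongrightarrow> (\<Sum>j<J. (taylor_coeff g j * 1^j)\<^sup>2)) (at_left 1)"
    by (intro tendsto_intros)
  moreover have "eventually (\<lambda>x. (\<Sum>j<J. (taylor_coeff g j * x^j)\<^sup>2) \<le> (intmean1 g)\<^sup>2) (at_left (1::real))"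
  proof (rule eventually_mono[OF eventually_at_left_real[of 0 1]])
    fix x :: real assume x: "x \<in> {0<..<1}"
    have "(\<Sum>j<J. (taylor_coeff g j * x^j)\<^sup>2) = (L2_set (\<lambda>j. taylor_coeff g j * x^j) {..<J})\<^sup>2"
      unfolding L2_set_def by (simp add: sum_nonneg)
    also have "\<dots> \<le> (intmean g x)\<^sup>2"
      using x by (intro power_mono L2_set_taylor_coeff_le_intmean hol) auto
    also have "\<dots> \<le> (intmean1 g)\<^sup>2"
      using x by (intro power_mono intmean_le_intmean1 assms intmean_nonneg) auto
    finally show "(\<Sum>j<J. (taylor_coeff g j * x^j)\<^sup>2) \<le> (intmean1 g)\<^sup>2" .
  qed simp
  ultimately show ?thesis using tendsto_upperbound by fastforce
qed

section \<open>Convexity of the integral means\<close>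

text \<open>Interpolation between the radii r and 1: writing t = r^theta with
  theta = ln t / ln r in [0, 1], Young's inequality splits each term
  t^(2j) = (r^(2j))^theta * 1^(1 - theta) between the two endpoint sums.\<close>

lemma sum_power_le_interpolation:
  fixes s :: "nat \<Rightarrow> real"
  assumes s0: "\<And>j. 0 \<le> s j" and sums_r: "(\<lambda>j. s j * r^(2*j)) sums Msq" and Msq: "0 < Msq"
    and sum_le_1: "\<And>J. (\<Sum>j<J. s j) \<le> 1"
    and r: "0 < r" "r < 1" and t: "r \<le> t" "t \<le> 1"
  shows "(\<Sum>j<J. s j * t^(2*j)) \<le> exp (ln t * ln Msq / ln r)"
proof -
  have t0: "0 < t" using r t by simp
  have ln_r: "ln r < 0" using r by simp
  define \<theta> where "\<theta> = ln t / ln r"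
  have \<theta>: "0 \<le> \<theta>" "\<theta> \<le> 1"
    using ln_r t0 r t by (auto simp: \<theta>_def divide_le_eq_1 divide_nonpos_neg)
  have t_pow: "t^(2*j) = Msq powr \<theta> * (r^(2*j)/Msq) powr \<theta>" for j
  proof -
    have "Msq powr \<theta> * (r^(2*j)/Msq) powr \<theta> = (r^(2*j)) powr \<theta>"
      using Msq r by (simp add: powr_mult[symmetric])
    also have "\<dots> = exp (real (2*j) * ln t)"
      using r ln_r by (simp add: powr_def ln_realpow \<theta>_def)
    also have "\<dots> = exp (ln (t^(2*j)))"
      using t0 by (simp add: ln_realpow)
    also have "\<dots> = t^(2*j)"
      using t0 by simp
    finally show ?thesis by simp
  qed
  have young: "(r^(2*j)/Msq) powr \<theta> \<le> \<theta> * (r^(2*j)/Msq) + (1 - \<theta>)" for j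
    using Youngs_inequality_0[of \<theta> "1-\<theta>" "r^(2*j)/Msq" 1] \<theta> Msq r by simp
  have partial_r: "(\<Sum>j<J. s j * r^(2*j)) \<le> Msq"
    using sums_r s0 r sum_le_suminf[of "\<lambda>j. s j * r^(2*j)"] sums_unique[OF sums_r]
    by (auto simp: sums_summable)
  have "(\<Sum>j<J. s j * t^(2*j)) \<le> (\<Sum>j<J. s j * (Msq powr \<theta> * (\<theta> * (r^(2*j)/Msq) + (1 - \<theta>))))"
    unfolding t_pow by (intro sum_mono mult_left_mono s0 young) auto
  also have "\<dots> = (\<Sum>j<J. (Msq powr \<theta> * (\<theta> / Msq)) * (s j * r^(2*j)) + (Msq powr \<theta> * (1 - \<theta>)) * s j)"
    by (intro sum.cong refl) (simp add: algebra_simps)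
  also have "\<dots> = (Msq powr \<theta> * (\<theta> / Msq)) * (\<Sum>j<J. s j * r^(2*j)) + (Msq powr \<theta> * (1 - \<theta>)) * (\<Sum>j<J. s j)"
    by (simp add: sum.distrib sum_distrib_left)
  also have "\<dots> = Msq powr \<theta> * (\<theta> / Msq * (\<Sum>j<J. s j * r^(2*j)) + (1 - \<theta>) * (\<Sum>j<J. s j))"
    by (simp only: distrib_left mult.assoc)
  also have "\<dots> \<le> Msq powr \<theta> * (\<theta> / Msq * Msq + (1 - \<theta>) * 1)"
    using \<theta> Msq partial_r sum_le_1[of J]
    by (intro mult_left_mono add_mono) simp_all
  also have "\<dots> = exp (ln t * ln Msq / ln r)"
    using Msq by (simp add: powr_def \<theta>_def)
  finally show ?thesis .
qed

lemma L2_set_taylor_coeff_le_interpolation: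
  assumes "hardy2 g" "intmean1 g \<le> 1" "0 < intmean g r" "0 < r" "r < 1" "r \<le> t" "t \<le> 1"
  shows "L2_set (\<lambda>j. taylor_coeff g j * t^j) {..<J} \<le> exp (ln t * ln (intmean g r) / ln r)"
proof -
  have hol: "g holomorphic_on ball 0 1" using assms(1) by (simp add: hardy2_def)
  have "0 \<le> intmean1 g" using intmean_le_intmean1[OF assms(1,4,5)] intmean_nonneg[of g r] by simp
  then have "(\<Sum>j<J. (taylor_coeff g j)\<^sup>2) \<le> 1" for J
    using sum_taylor_coeff_squared_le_intmean1[OF assms(1), of J] assms(2) power_le_one[of "intmean1 g" 2]
    by linarith
  moreover have "(\<lambda>j. (taylor_coeff g j)\<^sup>2 * r^(2*j)) sums (intmean g r)\<^sup>2"
    using intmean_squared_sums[OF hol assms(4,5)] by (simp add: power_mult_distrib power_mult mult.commute[of 2])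
  ultimately have "(\<Sum>j<J. (taylor_coeff g j)\<^sup>2 * t^(2*j)) \<le> exp (ln t * ln ((intmean g r)\<^sup>2) / ln r)"
    using assms by (intro sum_power_le_interpolation) auto
  also have "\<dots> = (exp (ln t * ln (intmean g r) / ln r))\<^sup>2"
    using assms(3) by (simp add: power2_eq_square ln_mult flip: exp_add)
  finally show ?thesis
    by (simp add: L2_set_le_iff_sum_le power_mult_distrib power_mult mult.commute[of 2])
qed

section \<open>Taylor expansion of the coefficient sequence\<close>

definition pow_deriv :: "nat \<Rightarrow> nat \<Rightarrow> real \<Rightarrow> real" where
  "pow_deriv n i t = (if i \<le> n then fact n / fact (n - i) * t^(n - i) else 0)"

lemma pow_deriv_has_real_derivative: "(pow_deriv n i has_real_derivative pow_deriv n (Suc i) t) (at t)"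
proof (cases "i < n")
  case True
  then obtain d where d: "n - i = Suc d" "n - Suc i = d" by (metis Suc_diff_Suc)
  have eq: "pow_deriv n i = (\<lambda>t. fact n / fact (Suc d) * t^(Suc d))"
    using True d by (auto simp: pow_deriv_def fun_eq_iff)
  have "((\<lambda>t. fact n / fact (Suc d) * t^(Suc d)) has_real_derivative fact n / fact (Suc d) * (real (Suc d) * t^d)) (at t)"
    using DERIV_cmult[OF DERIV_pow[of "Suc d" t], of "fact n / fact (Suc d)"] by simp
  moreover have "fact n / fact (Suc d) * (real (Suc d) * t^d) = pow_deriv n (Suc i) t"
    using True d by (simp add: pow_deriv_def fact_Suc del: of_nat_Suc)
  ultimately show ?thesis unfolding eq by simp
next
  case False
  then have "pow_deriv n i = (\<lambda>t. if i = n then fact n else 0)"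
    by (auto simp: pow_deriv_def fun_eq_iff)
  moreover have "pow_deriv n (Suc i) t = 0" using False by (simp add: pow_deriv_def)
  ultimately show ?thesis by simp
qed

lemma continuous_on_pow_deriv: "continuous_on S (pow_deriv n i)"
  by (rule DERIV_continuous_on) (rule has_field_derivative_at_within[OF pow_deriv_has_real_derivative])

lemma pow_deriv_nonneg: "0 \<le> t \<Longrightarrow> 0 \<le> pow_deriv n i t"
  by (simp add: pow_deriv_def)

lemma pow_taylor_integral:
  assumes "0 < k" "r \<le> \<rho>"
  shows "\<rho>^n = (\<Sum>i<k. (\<rho> - r)^i / fact i * pow_deriv n i r)
    + integral {r..\<rho>} (\<lambda>t. (\<rho> - t)^(k-1) / fact (k-1) * pow_deriv n k t)"
proof -
  have "pow_deriv n 0 = (\<lambda>t. t^n)" by (simp add: pow_deriv_def fun_eq_iff)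
  from Taylor_integral[of k "pow_deriv n" "\<lambda>t. t^n" r \<rho>, OF assms(1) this _ assms(2)]
  show ?thesis
    using pow_deriv_has_real_derivative
    by (auto simp: has_real_derivative_iff_has_vector_derivative[symmetric]
        intro: has_field_derivative_at_within)
qed

lemma taylor_coeff_mult_pow_deriv:
  "taylor_coeff f n * pow_deriv n s t =
    (if s \<le> n then taylor_coeff ((deriv ^^ s) f) (n - s) * t^(n - s) else 0)"
proof (cases "s \<le> n")
  case True
  then have "(deriv ^^ (n - s)) ((deriv ^^ s) f) = (deriv ^^ n) f"
    by (metis funpow_add comp_apply le_add_diff_inverse2)
  then show ?thesis using True by (simp add: taylor_coeff_def pow_deriv_def)
qed (simp add: pow_deriv_def)

lemma L2_set_taylor_coeff_mult_pow_deriv: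
  "L2_set (\<lambda>n. taylor_coeff f n * pow_deriv n s t) {..<N} =
    L2_set (\<lambda>j. taylor_coeff ((deriv ^^ s) f) j * t^j) {..<N - s}"
  unfolding taylor_coeff_mult_pow_deriv
  using L2_set_shift_lessThan[of s "\<lambda>j. taylor_coeff ((deriv ^^ s) f) j * t^j" N] by simp

section \<open>Integral inequalities for the remainder\<close>

lemma exp_taylor_kernel_primitive:
  fixes \<alpha> \<rho> :: real
  assumes "\<alpha> > 0"
  shows "((\<lambda>t. exp (\<alpha> * (t - \<rho>)) * (\<Sum>i\<le>m. (\<rho> - t)^i / (fact i * \<alpha>^(Suc m - i))))
     has_real_derivative (exp (\<alpha> * (x - \<rho>)) * (\<rho> - x)^m / fact m)) (at x)"
proof (induction m)
  case 0
  show ?case using assms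
    by (auto intro!: derivative_eq_intros simp: field_simps)
next
  case (Suc m)
  let ?E = "\<lambda>t. exp (\<alpha> * (t - \<rho>))"
  have eq: "(\<lambda>t. ?E t * (\<Sum>i\<le>Suc m. (\<rho> - t)^i / (fact i * \<alpha>^(Suc (Suc m) - i))))
    = (\<lambda>t. (?E t * (\<Sum>i\<le>m. (\<rho> - t)^i / (fact i * \<alpha>^(Suc m - i)))) / \<alpha>
        + ?E t * (\<rho> - t)^(Suc m) / (fact (Suc m) * \<alpha>))"
  proof
    fix t
    have "(\<Sum>i\<le>m. (\<rho> - t)^i / (fact i * \<alpha>^(Suc (Suc m) - i)))
        = (\<Sum>i\<le>m. (\<rho> - t)^i / (fact i * \<alpha>^(Suc m - i))) / \<alpha>"
      unfolding sum_divide_distrib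
      by (intro sum.cong refl) (simp add: Suc_diff_le field_simps)
    then show "?E t * (\<Sum>i\<le>Suc m. (\<rho> - t)^i / (fact i * \<alpha>^(Suc (Suc m) - i)))
      = (?E t * (\<Sum>i\<le>m. (\<rho> - t)^i / (fact i * \<alpha>^(Suc m - i)))) / \<alpha>
        + ?E t * (\<rho> - t)^(Suc m) / (fact (Suc m) * \<alpha>)"
      by (simp add: algebra_simps)
  qed
  have "((\<lambda>t. ?E t * (\<rho> - t)^(Suc m)) has_real_derivative
      ?E x * \<alpha> * (\<rho> - x)^(Suc m) - ?E x * (real (Suc m) * (\<rho> - x)^m)) (at x)"
    by (rule derivative_eq_intros refl | simp)+
  then have "((\<lambda>t. (?E t * (\<Sum>i\<le>m. (\<rho> - t)^i / (fact i * \<alpha>^(Suc m - i)))) / \<alpha>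
        + ?E t * (\<rho> - t)^(Suc m) / (fact (Suc m) * \<alpha>)) has_real_derivative
     (?E x * (\<rho> - x)^m / fact m) / \<alpha> +
       (?E x * \<alpha> * (\<rho> - x)^(Suc m) - ?E x * (real (Suc m) * (\<rho> - x)^m)) / (fact (Suc m) * \<alpha>)) (at x)"
    by (intro DERIV_add DERIV_cdivide Suc.IH)
  moreover have "(?E x * (\<rho> - x)^m / fact m) / \<alpha> +
       (?E x * \<alpha> * (\<rho> - x)^(Suc m) - ?E x * (real (Suc m) * (\<rho> - x)^m)) / (fact (Suc m) * \<alpha>)
     = ?E x * (\<rho> - x)^(Suc m) / fact (Suc m)"
  proof -
    have "E * p / F / \<alpha> + (E * \<alpha> * (d * p) - E * (c * p)) / (c * F * \<alpha>) = E * (d * p) / (c * F)"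
      if "F \<noteq> 0" "c \<noteq> 0" for E p F c d :: real
      using that assms by (simp add: field_simps)
    from this[of "fact m" "real (Suc m)" "?E x" "(\<rho> - x)^m" "\<rho> - x"] show ?thesis
      by (simp only: fact_Suc power_Suc of_nat_mult) simp
  qed
  ultimately show ?case unfolding eq by simp
qed

lemma integral_taylor_kernel_exp_le:
  fixes \<alpha> r \<rho> :: real
  assumes \<alpha>: "\<alpha> > 0" and r\<rho>: "r \<le> \<rho>"
  shows "integral {r..\<rho>} (\<lambda>t. (\<rho> - t)^m / fact m * exp (\<alpha> * (t - \<rho>))) \<le> 1 / \<alpha>^(Suc m)"
proof -
  define \<Phi> where "\<Phi> t = exp (\<alpha> * (t - \<rho>)) * (\<Sum>i\<le>m. (\<rho> - t)^i / (fact i * \<alpha>^(Suc m - i)))" for t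
  have "((\<lambda>t. (\<rho> - t)^m / fact m * exp (\<alpha> * (t - \<rho>))) has_integral (\<Phi> \<rho> - \<Phi> r)) {r..\<rho>}"
  proof (rule fundamental_theorem_of_calculus[OF r\<rho>])
    fix x assume "x \<in> {r..\<rho>}"
    show "(\<Phi> has_vector_derivative (\<rho> - x)^m / fact m * exp (\<alpha> * (x - \<rho>))) (at x within {r..\<rho>})"
      unfolding \<Phi>_def using exp_taylor_kernel_primitive[OF \<alpha>, of \<rho> m x]
      by (simp add: has_real_derivative_iff_has_vector_derivative has_vector_derivative_at_within mult_ac)
  qed
  moreover have "\<Phi> \<rho> = 1 / \<alpha>^(Suc m)"
  proof -
    have "(\<Sum>i\<le>m. (\<rho> - \<rho>)^i / (fact i * \<alpha>^(Suc m - i))) = (\<Sum>i\<le>m. if i = 0 then 1 / \<alpha>^(Suc m) else 0)"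
      by (intro sum.cong refl) auto
    then show ?thesis by (simp add: \<Phi>_def)
  qed
  moreover have "\<Phi> r \<ge> 0"
    unfolding \<Phi>_def using r\<rho> \<alpha> by (intro mult_nonneg_nonneg sum_nonneg divide_nonneg_nonneg) auto
  ultimately show ?thesis
    by (auto dest: integral_unique)
qed

lemma sq_le_mult_if_AM_GM_bound:
  fixes X I J :: real
  assumes X: "X \<ge> 0" and I: "I \<ge> 0" and J: "J \<ge> 0"
    and bound: "\<And>l. l > 0 \<Longrightarrow> X \<le> l * I / 2 + J / (2 * l)"
  shows "X\<^sup>2 \<le> I * J"
proof (cases "X = 0")
  case True
  then show ?thesis using I J by simp
next
  case False
  then have X: "X > 0" using X by simp
  show ?thesis
  proof (cases "I = 0")
    case True
    have "X \<le> J / (2 * ((J + 1) / X))" using bound[of "(J + 1) / X"] X J True by simp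
    also have "\<dots> < X" using X J by (simp add: field_simps add_nonneg_pos)
    finally show ?thesis by simp
  next
    case False
    then have I: "I > 0" using I by simp
    have "X \<le> (X / I) * I / 2 + J / (2 * (X / I))" using bound[of "X / I"] X I by simp
    then have "X \<le> X / 2 + J * I / (2 * X)" using I X by (simp add: field_simps)
    then have "2 * X * X \<le> 2 * X * (X / 2 + J * I / (2 * X))" using X by simp
    also have "\<dots> = X * X + J * I" using X by (simp add: field_simps)
    finally show ?thesis by (simp add: power2_eq_square algebra_simps)
  qed
qed

text \<open>Minkowski's integral inequality for a finite family, via the weighted Cauchy-Schwarz
  inequality (int w e_n)^2 <= (int w m) (int w e_n^2 / m) and the pointwise bound
  sum_n e_n^2 / m <= m.\<close>

lemma L2_set_integral_le_integral:
  fixes e :: "nat \<Rightarrow> real \<Rightarrow> real" and w m :: "real \<Rightarrow> real"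
  assumes cont_w: "continuous_on {r..\<rho>} w" and cont_e: "\<And>n. continuous_on {r..\<rho>} (e n)"
    and cont_m: "continuous_on {r..\<rho>} m"
    and w0: "\<And>t. t \<in> {r..\<rho>} \<Longrightarrow> 0 \<le> w t" and m0: "\<And>t. t \<in> {r..\<rho>} \<Longrightarrow> 0 < m t"
    and e0: "\<And>n t. t \<in> {r..\<rho>} \<Longrightarrow> 0 \<le> e n t"
    and bound: "\<And>t. t \<in> {r..\<rho>} \<Longrightarrow> L2_set (\<lambda>n. e n t) {..<N} \<le> m t"
  shows "L2_set (\<lambda>n. integral {r..\<rho>} (\<lambda>t. w t * e n t)) {..<N} \<le> integral {r..\<rho>} (\<lambda>t. w t * m t)"
proof -
  define I where "I = integral {r..\<rho>} (\<lambda>t. w t * m t)"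
  define J where "J n = integral {r..\<rho>} (\<lambda>t. w t * (e n t)\<^sup>2 / m t)" for n
  have int_wm: "(\<lambda>t. w t * m t) integrable_on {r..\<rho>}"
    by (intro integrable_continuous_interval continuous_intros cont_w cont_m)
  have int_we: "(\<lambda>t. w t * e n t) integrable_on {r..\<rho>}" for n
    by (intro integrable_continuous_interval continuous_intros cont_w cont_e)
  have int_wJ: "(\<lambda>t. w t * (e n t)\<^sup>2 / m t) integrable_on {r..\<rho>}" for n
    using m0 by (intro integrable_continuous_interval continuous_intros cont_w cont_e cont_m) force
  have I0: "I \<ge> 0" unfolding I_def
    by (intro integral_nonneg int_wm) (auto intro!: mult_nonneg_nonneg w0 less_imp_le[OF m0])
  have J0: "J n \<ge> 0" for n unfolding J_def
    by (intro integral_nonneg int_wJ) (auto intro!: mult_nonneg_nonneg divide_nonneg_nonneg w0 less_imp_le[OF m0])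
  have cauchy_schwarz: "(integral {r..\<rho>} (\<lambda>t. w t * e n t))\<^sup>2 \<le> I * J n" for n
  proof (rule sq_le_mult_if_AM_GM_bound[OF _ I0 J0])
    show "0 \<le> integral {r..\<rho>} (\<lambda>t. w t * e n t)"
      by (intro integral_nonneg int_we) (auto intro!: mult_nonneg_nonneg w0 e0)
    fix l :: real assume l: "l > 0"
    have "integral {r..\<rho>} (\<lambda>t. w t * e n t)
        \<le> integral {r..\<rho>} (\<lambda>t. (l/2) * (w t * m t) + (1/(2*l)) * (w t * (e n t)\<^sup>2 / m t))"
    proof (rule integral_le[OF int_we])
      show "(\<lambda>t. (l/2) * (w t * m t) + (1/(2*l)) * (w t * (e n t)\<^sup>2 / m t)) integrable_on {r..\<rho>}"
        by (intro integrable_add integrable_on_mult_right int_wm int_wJ)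
      fix t assume t: "t \<in> {r..\<rho>}"
      have "2 * l * m t * e n t \<le> (l * m t)\<^sup>2 + (e n t)\<^sup>2"
        using sum_squares_ge_zero[of "l * m t - e n t" 0] by (simp add: power2_eq_square algebra_simps)
      then have "e n t \<le> (l/2) * m t + (1/(2*l)) * ((e n t)\<^sup>2 / m t)"
        using m0[OF t] l by (simp add: field_simps power2_eq_square)
      then have "w t * e n t \<le> w t * ((l/2) * m t + (1/(2*l)) * ((e n t)\<^sup>2 / m t))"
        by (intro mult_left_mono w0[OF t])
      then show "w t * e n t \<le> (l/2) * (w t * m t) + (1/(2*l)) * (w t * (e n t)\<^sup>2 / m t)"
        by (simp add: algebra_simps)
    qed
    also have "\<dots> = integral {r..\<rho>} (\<lambda>t. (l/2) * (w t * m t))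
        + integral {r..\<rho>} (\<lambda>t. (1/(2*l)) * (w t * (e n t)\<^sup>2 / m t))"
      by (intro integral_add integrable_on_mult_right int_wm int_wJ)
    also have "\<dots> = (l/2) * I + (1/(2*l)) * J n"
      unfolding I_def J_def by (simp only: integral_mult_right)
    finally show "integral {r..\<rho>} (\<lambda>t. w t * e n t) \<le> l * I / 2 + J n / (2 * l)" by simp
  qed
  have sum_J: "(\<Sum>n<N. J n) \<le> I"
  proof -
    have "(\<Sum>n<N. J n) = integral {r..\<rho>} (\<lambda>t. \<Sum>n<N. w t * (e n t)\<^sup>2 / m t)"
      unfolding J_def by (rule integral_sum[symmetric]) (auto intro: int_wJ)
    also have "\<dots> \<le> I"
      unfolding I_def
    proof (rule integral_le)
      show "(\<lambda>t. \<Sum>n<N. w t * (e n t)\<^sup>2 / m t) integrable_on {r..\<rho>}"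
        by (intro integrable_sum finite_lessThan int_wJ)
      fix t assume t: "t \<in> {r..\<rho>}"
      have "(\<Sum>n<N. (e n t)\<^sup>2) \<le> (m t)\<^sup>2"
        using bound[OF t] m0[OF t] by (simp add: L2_set_le_iff_sum_le)
      then have "w t / m t * (\<Sum>n<N. (e n t)\<^sup>2) \<le> w t / m t * (m t)\<^sup>2"
        using w0[OF t] m0[OF t] by (intro mult_left_mono) auto
      then show "(\<Sum>n<N. w t * (e n t)\<^sup>2 / m t) \<le> w t * m t"
        using m0[OF t] by (simp add: sum_distrib_left power2_eq_square)
    qed (rule int_wm)
    finally show ?thesis .
  qed
  have "(\<Sum>n<N. (integral {r..\<rho>} (\<lambda>t. w t * e n t))\<^sup>2) \<le> (\<Sum>n<N. I * J n)"
    by (intro sum_mono cauchy_schwarz)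
  also have "\<dots> \<le> I * I"
    using sum_J I0 by (simp add: mult_left_mono flip: sum_distrib_left)
  finally show ?thesis
    using I0 unfolding I_def by (simp add: L2_set_le_iff_sum_le power2_eq_square)
qed

lemma L2_set_taylor_remainder_le:
  fixes e :: "nat \<Rightarrow> real \<Rightarrow> real"
  assumes k: "0 < k" and \<alpha>: "0 < \<alpha>" and r\<rho>: "r \<le> \<rho>"
    and cont_e: "\<And>n. continuous_on {r..\<rho>} (e n)" and e0: "\<And>n t. t \<in> {r..\<rho>} \<Longrightarrow> 0 \<le> e n t"
    and bound: "\<And>t. t \<in> {r..\<rho>} \<Longrightarrow> L2_set (\<lambda>n. e n t) {..<N} \<le> exp (\<alpha> * (t - \<rho>))"
  shows "L2_set (\<lambda>n. integral {r..\<rho>} (\<lambda>t. (\<rho> - t)^(k-1) / fact (k-1) * e n t)) {..<N} \<le> 1 / \<alpha>^k"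
proof -
  have "L2_set (\<lambda>n. integral {r..\<rho>} (\<lambda>t. (\<rho> - t)^(k-1) / fact (k-1) * e n t)) {..<N}
      \<le> integral {r..\<rho>} (\<lambda>t. (\<rho> - t)^(k-1) / fact (k-1) * exp (\<alpha> * (t - \<rho>)))"
    by (rule L2_set_integral_le_integral) (auto intro!: continuous_intros cont_e e0 bound)
  also have "\<dots> \<le> 1 / \<alpha>^k"
    using integral_taylor_kernel_exp_le[OF \<alpha> r\<rho>, of "k - 1"] k by simp
  finally show ?thesis .
qed

lemma L2_set_taylor_term_le:
  assumes "(deriv ^^ s) f holomorphic_on ball 0 1" "0 < r" "r < 1"
  shows "L2_set (\<lambda>n. taylor_coeff f n * pow_deriv n s r) {..<N} \<le> intmean ((deriv ^^ s) f) r"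
  unfolding L2_set_taylor_coeff_mult_pow_deriv by (rule L2_set_taylor_coeff_le_intmean[OF assms])

text \<open>If M_{f^(k)}(r) = 0 then all Taylor coefficients of f^(k) vanish, so the remainder does
  too; this matches the right-hand side because ln 0 = 0 in Isabelle.\<close>

lemma L2_set_taylor_remainder_coeff_le:
  assumes k: "0 < k" and hardy: "hardy2 ((deriv ^^ k) f)" and mean1: "intmean1 ((deriv ^^ k) f) \<le> 1"
    and r: "0 < r" "r \<le> \<rho>" "\<rho> < 1" and M1: "intmean ((deriv ^^ k) f) r < 1"
  shows "L2_set (\<lambda>n. integral {r..\<rho>}
      (\<lambda>t. (\<rho> - t)^(k-1) / fact (k-1) * (taylor_coeff f n * pow_deriv n k t))) {..<N}
    \<le> (ln r / ln (intmean ((deriv ^^ k) f) r))^k"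
proof -
  define M where "M = intmean ((deriv ^^ k) f) r"
  have hol: "(deriv ^^ k) f holomorphic_on ball 0 1" using hardy by (simp add: hardy2_def)
  have r1: "r < 1" using r by simp
  show ?thesis
  proof (cases "M = 0")
    case True
    have "(\<lambda>j. (taylor_coeff ((deriv ^^ k) f) j * r^j)\<^sup>2) sums 0"
      using intmean_squared_sums[OF hol r(1) r1] True by (simp add: M_def)
    then have "\<forall>j. (taylor_coeff ((deriv ^^ k) f) j * r^j)\<^sup>2 = 0"
      using suminf_eq_zero_iff[of "\<lambda>j. (taylor_coeff ((deriv ^^ k) f) j * r^j)\<^sup>2"]
      by (simp add: sums_iff)
    then have vanish: "taylor_coeff f n * pow_deriv n k t = 0" for n t
      using r(1) by (simp add: taylor_coeff_mult_pow_deriv)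
    have "(\<lambda>t. (\<rho> - t)^(k-1) / fact (k-1) * (taylor_coeff f n * pow_deriv n k t)) = (\<lambda>t. 0)" for n
      by (simp only: vanish mult_zero_right)
    then show ?thesis using True k by (simp add: M_def L2_set_0')
  next
    case False
    then have M: "0 < M" "M < 1" using intmean_nonneg M1 by (auto simp: M_def order.not_eq_order_implies_strict)
    define \<alpha> where "\<alpha> = ln M / ln r"
    have \<alpha>: "0 < \<alpha>" using M r r1 by (simp add: \<alpha>_def divide_neg_neg)
    have "L2_set (\<lambda>n. integral {r..\<rho>}
        (\<lambda>t. (\<rho> - t)^(k-1) / fact (k-1) * (taylor_coeff f n * pow_deriv n k t))) {..<N} \<le> 1 / \<alpha>^k"
    proof (rule L2_set_taylor_remainder_le[OF k \<alpha> r(2)])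
      show "continuous_on {r..\<rho>} (\<lambda>t. taylor_coeff f n * pow_deriv n k t)" for n
        by (intro continuous_intros continuous_on_pow_deriv)
      show "0 \<le> taylor_coeff f n * pow_deriv n k t" if "t \<in> {r..\<rho>}" for n t
        using that r by (auto intro!: mult_nonneg_nonneg pow_deriv_nonneg taylor_coeff_nonneg)
      fix t assume t: "t \<in> {r..\<rho>}"
      have "L2_set (\<lambda>n. taylor_coeff f n * pow_deriv n k t) {..<N}
          = L2_set (\<lambda>j. taylor_coeff ((deriv ^^ k) f) j * t^j) {..<N - k}"
        by (rule L2_set_taylor_coeff_mult_pow_deriv)
      also have "\<dots> \<le> exp (ln t * ln M / ln r)"
        unfolding M_def using t r M by (intro L2_set_taylor_coeff_le_interpolation hardy mean1) (auto simp: M_def)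
      also have "\<dots> \<le> exp (\<alpha> * (t - \<rho>))"
      proof -
        have "ln t * ln M / ln r = \<alpha> * ln t" by (simp add: \<alpha>_def)
        also have "\<dots> \<le> \<alpha> * (t - \<rho>)"
          using ln_le_minus_one[of t] t r \<alpha> by (intro mult_left_mono) auto
        finally show ?thesis by simp
      qed
      finally show "L2_set (\<lambda>n. taylor_coeff f n * pow_deriv n k t) {..<N} \<le> exp (\<alpha> * (t - \<rho>))" .
    qed
    then show ?thesis by (simp add: \<alpha>_def M_def power_divide)
  qed
qed

lemma L2_set_taylor_coeff_le_taylor_bound:
  assumes k: "0 < k" and hardy: "hardy_k2 k f" and mean1: "intmean1 ((deriv ^^ k) f) \<le> 1"
    and r: "0 < r" "r \<le> \<rho>" "\<rho> < 1" and M1: "intmean ((deriv ^^ k) f) r < 1"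
  shows "L2_set (\<lambda>n. taylor_coeff f n * \<rho>^n) {..<N}
    \<le> (\<Sum>s<k. (1 - r)^s / fact s * intmean ((deriv ^^ s) f) r) + (ln r / ln (intmean ((deriv ^^ k) f) r))^k"
proof -
  define u where "u s n = (\<rho> - r)^s / fact s * (taylor_coeff f n * pow_deriv n s r)" for s n
  define R where "R n = integral {r..\<rho>}
      (\<lambda>t. (\<rho> - t)^(k-1) / fact (k-1) * (taylor_coeff f n * pow_deriv n k t))" for n
  have hardy_s: "hardy2 ((deriv ^^ s) f)" if "s \<le> k" for s
    using hardy that by (simp add: hardy_k2_def)
  have expansion: "taylor_coeff f n * \<rho>^n = (\<Sum>s<k. u s n) + R n" for n
  proof -
    have "taylor_coeff f n * \<rho>^n = (\<Sum>s<k. taylor_coeff f n * ((\<rho> - r)^s / fact s * pow_deriv n s r))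
        + taylor_coeff f n * integral {r..\<rho>} (\<lambda>t. (\<rho> - t)^(k-1) / fact (k-1) * pow_deriv n k t)"
      by (subst pow_taylor_integral[OF k r(2)]) (simp add: distrib_left sum_distrib_left)
    also have "(\<Sum>s<k. taylor_coeff f n * ((\<rho> - r)^s / fact s * pow_deriv n s r)) = (\<Sum>s<k. u s n)"
      unfolding u_def by (intro sum.cong refl) (simp add: algebra_simps)
    also have "taylor_coeff f n * integral {r..\<rho>} (\<lambda>t. (\<rho> - t)^(k-1) / fact (k-1) * pow_deriv n k t) = R n"
      unfolding R_def by (simp add: algebra_simps flip: integral_mult_right)
    finally show ?thesis .
  qed
  have term_le: "L2_set (u s) {..<N} \<le> (1 - r)^s / fact s * intmean ((deriv ^^ s) f) r" if "s < k" for s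
  proof -
    have "L2_set (u s) {..<N} = (\<rho> - r)^s / fact s * L2_set (\<lambda>n. taylor_coeff f n * pow_deriv n s r) {..<N}"
      unfolding u_def using r by (subst L2_set_right_distrib) auto
    also have "\<dots> \<le> (1 - r)^s / fact s * intmean ((deriv ^^ s) f) r"
    proof (rule mult_mono)
      show "(\<rho> - r)^s / fact s \<le> (1 - r)^s / fact s"
        using r by (intro divide_right_mono power_mono) auto
      show "L2_set (\<lambda>n. taylor_coeff f n * pow_deriv n s r) {..<N} \<le> intmean ((deriv ^^ s) f) r"
        using hardy_s[of s] that r by (intro L2_set_taylor_term_le) (auto simp: hardy2_def)
    qed (use r in auto)
    finally show ?thesis .
  qed
  have "L2_set (\<lambda>n. taylor_coeff f n * \<rho>^n) {..<N} = L2_set (\<lambda>n. (\<Sum>s<k. u s n) + R n) {..<N}"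
    by (simp only: expansion)
  also have "\<dots> \<le> L2_set (\<lambda>n. \<Sum>s<k. u s n) {..<N} + L2_set R {..<N}"
    by (rule L2_set_triangle_ineq)
  also have "\<dots> \<le> (\<Sum>s<k. L2_set (u s) {..<N}) + L2_set R {..<N}"
    by (intro add_mono L2_set_sum_triangle) simp_all
  also have "\<dots> \<le> (\<Sum>s<k. (1 - r)^s / fact s * intmean ((deriv ^^ s) f) r)
      + (ln r / ln (intmean ((deriv ^^ k) f) r))^k"
    unfolding R_def
    by (intro add_mono sum_mono term_le L2_set_taylor_remainder_coeff_le k hardy_s mean1 r M1) auto
  finally show ?thesis .
qed

lemma intmean_le_taylor_bound:
  assumes k: "0 < k" and hardy: "hardy_k2 k f" and mean1: "intmean1 ((deriv ^^ k) f) \<le> 1"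
    and r: "0 < r" "r < 1" and M1: "intmean ((deriv ^^ k) f) r < 1" and \<rho>: "0 < \<rho>" "\<rho> < 1"
  shows "intmean f \<rho>
    \<le> (\<Sum>s<k. (1 - r)^s / fact s * intmean ((deriv ^^ s) f) r) + (ln r / ln (intmean ((deriv ^^ k) f) r))^k"
proof -
  have hol: "f holomorphic_on ball 0 1"
    using hardy[unfolded hardy_k2_def, rule_format, of 0] by (simp add: hardy2_def)
  show ?thesis
  proof (cases "r \<le> \<rho>")
    case True
    show ?thesis
      by (intro intmean_le_if_L2_set_taylor_coeff_le[OF hol \<rho>]
          L2_set_taylor_coeff_le_taylor_bound[OF k hardy mean1 r(1) True \<rho>(2) M1])
  next
    case False
    have "0 \<le> ln r / ln (intmean ((deriv ^^ k) f) r)"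
      using r M1 intmean_nonneg[of "(deriv ^^ k) f" r]
      by (cases "intmean ((deriv ^^ k) f) r = 0") (auto simp: zero_le_divide_iff)
    then have remainder_nonneg: "0 \<le> (ln r / ln (intmean ((deriv ^^ k) f) r))^k"
      by simp
    have "intmean f \<rho> \<le> intmean f r"
      using False by (intro intmean_mono hol \<rho>(1) r(2)) simp
    also have "\<dots> = (1 - r)^0 / fact 0 * intmean ((deriv ^^ 0) f) r"
      by simp
    also have "\<dots> \<le> (\<Sum>s<k. (1 - r)^s / fact s * intmean ((deriv ^^ s) f) r)"
      using k r by (intro member_le_sum mult_nonneg_nonneg divide_nonneg_nonneg intmean_nonneg) auto
    finally show ?thesis using remainder_nonneg by simp
  qed
qed

theorem lemma4:
  fixes k :: nat and f :: "complex \<Rightarrow> complex" and r :: real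
  assumes "k > 0" and "hardy_k2 k f" and "intmean1 ((deriv ^^ k) f) \<le> 1"
    and "0 < r" and "r < 1"
  shows "intmean ((deriv ^^ k) f) r = 1 \<or>
    hardy2_norm f \<le> (\<Sum>s<k. (1 - r) ^ s / fact s * intmean ((deriv ^^ s) f) r)
       + (ln r / ln (intmean ((deriv ^^ k) f) r)) ^ k"
proof -
  have "hardy2 ((deriv ^^ k) f)"
    using assms(2) by (simp add: hardy_k2_def)
  then have "intmean ((deriv ^^ k) f) r \<le> 1"
    using intmean_le_intmean1 assms(3-5) by fastforce
  moreover have "hardy2_norm f \<le> (\<Sum>s<k. (1 - r) ^ s / fact s * intmean ((deriv ^^ s) f) r)
       + (ln r / ln (intmean ((deriv ^^ k) f) r)) ^ k"
    (is "_ \<le> ?bound") if "intmean ((deriv ^^ k) f) r < 1"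
    unfolding hardy2_norm_def intmean1_def
  proof (rule cSUP_least)
    fix \<rho> :: real assume "\<rho> \<in> {0<..<1}"
    then show "intmean f \<rho> \<le> ?bound"
      using that assms by (intro intmean_le_taylor_bound) auto
  qed simp
  ultimately show ?thesis by fastforce
qed

end
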